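(* Let $\mathcal{A}*\mathcal{X}=\mathcal{B}$ be a consistent tensor system with unique solution $\mathcal{X}^*$, $\mathcal{A}\in\mathbb{R}^{n_1\times n_2\times n}$, $\mathcal{B}\in\mathbb{R}^{n_1\times n_3\times n}$, let $\alpha>0$, and let $\mathcal{X}(t)$ be the iterates of cyclic frontal slice descent with learning rate $\alpha$. With $\mathcal{E}(t)=\|\mathcal{X}(t)-\mathcal{X}^*\|_F$ (so $\mathcal{E}(t)=\|\mathcal{X}^*\|_F$ for $t\le 0$), $$\kappa=\max_{i=1,\dots,n}\|\mathcal{I}-\alpha\tilde{\mathcal{A}}_i^T*\tilde{\mathcal{A}}_i\|_{op},\qquad \mu=\max_{i\neq j}\|\tilde{\mathcal{A}}_i^T*\tilde{\mathcal{A}}_j\|_{op},$$ we have for every $t\ge 0$: $$\mathcal{E}(t+1)\le\kappa\,\mathcal{E}(t)+\alpha\mu\sum_{i=1}^{n-1}\mathcal{E}(t-i).$$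
   Context: For $\mathcal{A}\in\mathbb{R}^{n_1\times n_2\times n}$ with frontal slices $A_k=\mathcal{A}(:,:,k)$: $\mathrm{unfold}(\mathcal{A})$ stacks $A_1,\dots,A_n$ vertically, $\mathrm{fold}$ is its inverse, $\mathrm{bcirc}(\mathcal{A})$ is the $n_1n\times n_2n$ block-circulant matrix with $(p,q)$ block $A_{((p-q)\bmod n)+1}$, and $\mathcal{A}*\mathcal{X}=\mathrm{fold}(\mathrm{bcirc}(\mathcal{A})\mathrm{unfold}(\mathcal{X}))$. $\mathcal{I}$ is the identity tensor (first frontal slice the identity matrix, others zero). $\mathcal{A}^T$ transposes each frontal slice and reverses the order of slices $2,\dots,n$. $\|\cdot\|_F$ is the Frobenius norm and $\|\mathcal{C}\|_{op}=\sup_{\|\mathcal{X}\|_F=1}\|\mathcal{C}*\mathcal{X}\|_F=\|\mathrm{bcirc}(\mathcal{C})\|_2$. $\tilde{\mathcal{A}}_k$ has $k$-th frontal slice $A_k$ and zeros elsewhere. Cyclic frontal slice descent: set $\mathcal{X}(t)=0$ for $t\le 0$; for $t=0,1,\dots$ let $\mathcal{R}(t+1)=\mathcal{B}-\sum_{j=0}^{n-1}\tilde{\mathcal{A}}_{((t-j)\bmod n)+1}*\mathcal{X}(t-j)$ and $\mathcal{X}(t+1)=\mathcal{X}(t)+\alpha\tilde{\mathcal{A}}_{(t\bmod n)+1}^T*\mathcal{R}(t+1)$. *)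

theory Defs
  imports Complex_Main
begin

text \<open>Third-order real tensors are represented as functions nat => nat => nat => real,
  indexed 0-based (row, column, frontal slice); dimensions are carried explicitly
  and entries outside the index box are ignored.\<close>

type_synonym tensor = "nat \<Rightarrow> nat \<Rightarrow> nat \<Rightarrow> real"

text \<open>t-product: fold(bcirc(A) unfold(X)), written out; A has m2 columns, n slices.
  Block (p,q) of bcirc(A) is the slice A_((p-q) mod n) (0-based).\<close>
definition tprod :: "nat \<Rightarrow> nat \<Rightarrow> tensor \<Rightarrow> tensor \<Rightarrow> tensor" where
  "tprod m2 n A X = (\<lambda>i j k. \<Sum>l<m2. \<Sum>q<n. A i l ((k + n - q) mod n) * X l j q)"

definition tadd :: "tensor \<Rightarrow> tensor \<Rightarrow> tensor" where
  "tadd X Y = (\<lambda>i j k. X i j k + Y i j k)"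

definition tsub :: "tensor \<Rightarrow> tensor \<Rightarrow> tensor" where
  "tsub X Y = (\<lambda>i j k. X i j k - Y i j k)"

definition tscale :: "real \<Rightarrow> tensor \<Rightarrow> tensor" where
  "tscale c X = (\<lambda>i j k. c * X i j k)"

definition tzero :: tensor where
  "tzero = (\<lambda>i j k. 0)"

definition tident :: tensor where
  "tident = (\<lambda>i j k. if k = 0 \<and> i = j then 1 else 0)"

definition ttrans :: "nat \<Rightarrow> tensor \<Rightarrow> tensor" where
  "ttrans n A = (\<lambda>i j k. A j i ((n - k) mod n))"

definition tslice :: "tensor \<Rightarrow> nat \<Rightarrow> tensor" where
  "tslice A k = (\<lambda>i j q. if q = k then A i j k else 0)"

definition frob :: "nat \<Rightarrow> nat \<Rightarrow> nat \<Rightarrow> tensor \<Rightarrow> real" where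
  "frob m1 m2 n X = sqrt (\<Sum>i<m1. \<Sum>j<m2. \<Sum>k<n. (X i j k)\<^sup>2)"

text \<open>Operator norm of an m1 x m2 x n tensor C: sup of ||C*X||_F over ||X||_F = 1,
  X of size m2 x 1 x n (this is exactly the spectral norm of bcirc(C)).\<close>
definition opnorm :: "nat \<Rightarrow> nat \<Rightarrow> nat \<Rightarrow> tensor \<Rightarrow> real" where
  "opnorm m1 m2 n C = Sup {frob m1 1 n (tprod m2 n C X) | X. frob m2 1 n X = 1}"

text \<open>Iterate t (t>=0); X(t) = 0 for t <= 0.
  X(t+1) = X(t) + alpha * tilde A_(t mod n)^T * R(t+1), with
  R(t+1) = B - sum_(j<n) tilde A_((t-j) mod n) * X(t-j), terms with t-j<0 vanish.\<close>
fun cfsd :: "tensor \<Rightarrow> tensor \<Rightarrow> real \<Rightarrow> nat \<Rightarrow> nat \<Rightarrow> nat \<Rightarrow> nat \<Rightarrow> tensor" where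
  "cfsd A B \<alpha> n1 n2 n 0 = tzero"
| "cfsd A B \<alpha> n1 n2 n (Suc t) =
     tadd (cfsd A B \<alpha> n1 n2 n t)
       (tscale \<alpha> (tprod n1 n (ttrans n (tslice A (t mod n)))
          (\<lambda>i j k. B i j k - (\<Sum>jj<n. if jj \<le> t
               then tprod n2 n (tslice A ((t - jj) mod n)) (cfsd A B \<alpha> n1 n2 n (t - jj)) i j k
               else 0))))"

end

theory Submission
  imports Defs "HOL-Analysis.L2_Norm"
begin

text \<open>Write D(t) = X(t) - X* and c = t mod n. Since A is the sum of its slice tensors A~_s and
  the indices (t - j) mod n, j < n, run through all slices, B = A * X* = \<Sum>_j A~_((t-j) mod n) * X*.
  Hence the residual is -\<Sum>_j A~_((t-j) mod n) * D(t - j), and associativity of the t-product gives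
  D(t+1) = (I - \<alpha> A~_c^T * A~_c) * D(t) - \<alpha> \<Sum>_(j=1..n-1) A~_c^T * A~_((t-j) mod n) * D(t - j).
  The estimate follows from the triangle inequality and ||C * Y||_F \<le> ||C||_op ||Y||_F, which reduces
  to single columns, the tensors over which the operator norm is taken.\<close>

section \<open>Cyclic index arithmetic\<close>

text \<open>The t-product writes the cyclic difference (a - q) mod n of slice indices as (a + n - q) mod n,
  which avoids truncated subtraction as long as q \<le> n.\<close>

lemma int_cyclic_diff:
  assumes "q \<le> (n::nat)"
  shows "int ((a + n - q) mod n) = (int a - int q) mod int n"
proof -
  have "int (a + n - q) = (int a - int q) + int n" using assms by simp
  then show ?thesis by (simp add: of_nat_mod)
qed

lemma cyclic_diff_involutive:
  assumes "q < (n::nat)"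
  shows "(a + n - (a + n - q) mod n) mod n = q"
proof -
  have "int ((a + n - (a + n - q) mod n) mod n) = (int a - (int a - int q) mod int n) mod int n"
    using assms int_cyclic_diff[of "(a + n - q) mod n" n a] int_cyclic_diff[of q n a] by simp
  also have "\<dots> = int q" using assms by (simp add: mod_diff_right_eq)
  finally show ?thesis by simp
qed

lemma cyclic_diff_swap:
  assumes "q < (n::nat)" "r < n"
  shows "((a + n - q) mod n + n - r) mod n = ((a + n - r) mod n + n - q) mod n"
proof -
  have "int (((a + n - q) mod n + n - r) mod n) = ((int a - int q) mod int n - int r) mod int n"
    using assms int_cyclic_diff[of r n "(a + n - q) mod n"] int_cyclic_diff[of q n a] by simp
  also have "\<dots> = ((int a - int r) mod int n - int q) mod int n"
    by (simp add: mod_diff_left_eq algebra_simps)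
  also have "\<dots> = int (((a + n - r) mod n + n - q) mod n)"
    using assms int_cyclic_diff[of q n "(a + n - r) mod n"] int_cyclic_diff[of r n a] by simp
  finally show ?thesis by simp
qed

lemma cyclic_diff_eq_mod_iff:
  assumes "q < (n::nat)"
  shows "(a + n - q) mod n = a mod n \<longleftrightarrow> q = 0"
proof
  assume "(a + n - q) mod n = a mod n"
  then have "int q = (int a - int (a mod n)) mod int n"
    using cyclic_diff_involutive[OF assms, of a] int_cyclic_diff[of "a mod n" n a] assms by simp
  also have "\<dots> = 0" by (simp add: of_nat_mod mod_diff_right_eq)
  finally show "q = 0" by simp
qed simp

lemma sum_cyclic_diff_reindex:
  "(\<Sum>q<n. f ((a + n - q) mod n)) = (\<Sum>q<(n::nat). f q)"
  by (rule sum.reindex_bij_witness[where i = "\<lambda>q. (a + n - q) mod n" and j = "\<lambda>q. (a + n - q) mod n"])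
     (auto simp: cyclic_diff_involutive)

section \<open>Algebra of the t-product\<close>

lemma tprod_cong:
  "(\<And>l q. l < m \<Longrightarrow> q < n \<Longrightarrow> X l j q = Y l j q) \<Longrightarrow> tprod m n C X i j k = tprod m n C Y i j k"
  unfolding tprod_def by (intro sum.cong refl) auto

lemma tprod_sum_left:
  "tprod m n (\<lambda>i j k. \<Sum>s\<in>S. C s i j k) X = (\<lambda>i j k. \<Sum>s\<in>S. tprod m n (C s) X i j k)"
  unfolding tprod_def by (simp add: sum_distrib_right sum.swap[of _ S])

lemma tprod_sum_right:
  "tprod m n C (\<lambda>i j k. \<Sum>s\<in>S. X s i j k) = (\<lambda>i j k. \<Sum>s\<in>S. tprod m n C (X s) i j k)"
  unfolding tprod_def by (simp add: sum_distrib_left sum.swap[of _ S])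

lemma tprod_tsub_left: "tprod m n (tsub C D) X = tsub (tprod m n C X) (tprod m n D X)"
  unfolding tprod_def tsub_def by (simp add: left_diff_distrib sum_subtractf)

lemma tprod_tsub_right: "tprod m n C (tsub X Y) = tsub (tprod m n C X) (tprod m n C Y)"
  unfolding tprod_def tsub_def by (simp add: right_diff_distrib sum_subtractf)

lemma tprod_tscale_left: "tprod m n (tscale c C) X = tscale c (tprod m n C X)"
  unfolding tprod_def tscale_def by (simp add: sum_distrib_left mult.assoc)

lemma tprod_tscale_right: "tprod m n C (tscale c X) = tscale c (tprod m n C X)"
  unfolding tprod_def tscale_def by (simp add: sum_distrib_left mult.left_commute)

lemma tprod_tzero_right: "tprod m n C tzero = tzero"
  unfolding tprod_def tzero_def by simp

lemma tprod_tident_left: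
  assumes "i < m" "k < n"
  shows "tprod m n tident X i j k = X i j k"
proof -
  have "(k + n - q) mod n = 0 \<longleftrightarrow> q = k" if "q < n" for q
    using cyclic_diff_involutive[OF that, of k] assms by auto
  then have "tprod m n tident X i j k = (\<Sum>l<m. \<Sum>q<n. if l = i \<and> q = k then X l j q else 0)"
    unfolding tprod_def tident_def by (intro sum.cong refl) auto
  also have "\<dots> = (\<Sum>l<m. if l = i then X l j k else 0)"
    using assms by (intro sum.cong refl) auto
  also have "\<dots> = X i j k" using assms by simp
  finally show ?thesis .
qed

lemma tprod_tslice_sum: "tprod m n A X = (\<lambda>i j k. \<Sum>s<n. tprod m n (tslice A s) X i j k)"
proof -
  have "tprod m n A X = tprod m n (\<lambda>i j k. \<Sum>s<n. tslice A s i j k) X"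
    unfolding tprod_def tslice_def by (intro ext sum.cong refl) auto
  then show ?thesis by (simp add: tprod_sum_left)
qed

lemma tprod_assoc: "tprod m1 n G (tprod m2 n H Z) = tprod m2 n (tprod m1 n G H) Z"
proof (intro ext)
  fix i j k
  have convolution: "(\<Sum>q<n. G i l ((k + n - q) mod n) * H l p ((q + n - r) mod n))
      = (\<Sum>q<n. G i l (((k + n - r) mod n + n - q) mod n) * H l p q)" if "r < n" for l p r
  proof -
    have "(\<Sum>q<n. G i l ((k + n - q) mod n) * H l p ((q + n - r) mod n))
        = (\<Sum>q<n. G i l q * H l p (((k + n - q) mod n + n - r) mod n))"
      by (subst sum_cyclic_diff_reindex[of _ k, symmetric]) (simp add: cyclic_diff_involutive)
    also have "\<dots> = (\<Sum>q<n. G i l q * H l p (((k + n - r) mod n + n - q) mod n))"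
      using that by (simp add: cyclic_diff_swap)
    also have "\<dots> = (\<Sum>q<n. G i l (((k + n - r) mod n + n - q) mod n) * H l p q)"
      by (subst sum_cyclic_diff_reindex[of _ "(k + n - r) mod n", symmetric]) (simp add: cyclic_diff_involutive)
    finally show ?thesis .
  qed
  have rotate: "(\<Sum>a\<in>A. \<Sum>b\<in>B. \<Sum>c\<in>C. f a b c) = (\<Sum>b\<in>B. \<Sum>c\<in>C. \<Sum>a\<in>A. f a b c)"
    for A B C and f :: "nat \<Rightarrow> nat \<Rightarrow> nat \<Rightarrow> real"
    by (simp add: sum.swap[of _ A])
  have "tprod m1 n G (tprod m2 n H Z) i j k
      = (\<Sum>l<m1. \<Sum>q<n. \<Sum>p<m2. \<Sum>r<n. G i l ((k + n - q) mod n) * H l p ((q + n - r) mod n) * Z p j r)"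
    unfolding tprod_def by (simp add: sum_distrib_left mult.assoc)
  also have "\<dots> = (\<Sum>l<m1. \<Sum>p<m2. \<Sum>r<n. \<Sum>q<n. G i l ((k + n - q) mod n) * H l p ((q + n - r) mod n) * Z p j r)"
    by (rule sum.cong[OF refl], rule rotate)
  also have "\<dots> = (\<Sum>p<m2. \<Sum>r<n. (\<Sum>l<m1. \<Sum>q<n. G i l ((k + n - q) mod n) * H l p ((q + n - r) mod n)) * Z p j r)"
    by (subst rotate) (simp add: sum_distrib_right)
  also have "\<dots> = tprod m2 n (tprod m1 n G H) Z i j k"
    unfolding tprod_def by (simp add: convolution sum_distrib_right)
  finally show "tprod m1 n G (tprod m2 n H Z) i j k = tprod m2 n (tprod m1 n G H) Z i j k" .
qed

section \<open>Frobenius and operator norms\<close>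

lemma frob_eq_L2_set: "frob m1 m2 n X = L2_set (\<lambda>(i, j, k). X i j k) ({..<m1} \<times> {..<m2} \<times> {..<n})"
  unfolding frob_def L2_set_def by (simp add: sum.cartesian_product case_prod_unfold)

lemma frob_nonneg: "0 \<le> frob m1 m2 n X"
  unfolding frob_eq_L2_set by simp

lemma frob_tzero: "frob m1 m2 n tzero = 0"
  unfolding frob_def tzero_def by simp

lemma frob_cong:
  "(\<And>i j k. i < m1 \<Longrightarrow> j < m2 \<Longrightarrow> k < n \<Longrightarrow> X i j k = Y i j k) \<Longrightarrow> frob m1 m2 n X = frob m1 m2 n Y"
  unfolding frob_def by (intro arg_cong[where f = sqrt] sum.cong refl) auto

lemma frob_tadd_le: "frob m1 m2 n (tadd X Y) \<le> frob m1 m2 n X + frob m1 m2 n Y"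
  unfolding frob_eq_L2_set tadd_def by (rule order_trans[OF _ L2_set_triangle_ineq]) (simp add: case_prod_unfold)

lemma frob_tscale: "0 \<le> c \<Longrightarrow> frob m1 m2 n (tscale c X) = c * frob m1 m2 n X"
  unfolding frob_eq_L2_set tscale_def by (simp add: L2_set_right_distrib case_prod_unfold)

lemma frob_tsub_le: "frob m1 m2 n (tsub X Y) \<le> frob m1 m2 n X + frob m1 m2 n Y"
proof -
  have "frob m1 m2 n (tscale (-1) Y) = frob m1 m2 n Y"
    unfolding frob_def tscale_def by simp
  moreover have "tsub X Y = tadd X (tscale (-1) Y)"
    unfolding tsub_def tadd_def tscale_def by simp
  ultimately show ?thesis using frob_tadd_le[of m1 m2 n X "tscale (-1) Y"] by simp
qed

lemma frob_sum_le:
  assumes "finite S"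
  shows "frob m1 m2 n (\<lambda>i j k. \<Sum>s\<in>S. X s i j k) \<le> (\<Sum>s\<in>S. frob m1 m2 n (X s))"
  using assms
proof (induction S rule: finite_induct)
  case empty
  then show ?case unfolding frob_def by simp
next
  case (insert s S)
  have "frob m1 m2 n (\<lambda>i j k. \<Sum>s\<in>insert s S. X s i j k) = frob m1 m2 n (tadd (X s) (\<lambda>i j k. \<Sum>s\<in>S. X s i j k))"
    using insert.hyps by (simp add: tadd_def)
  also have "\<dots> \<le> frob m1 m2 n (X s) + (\<Sum>s\<in>S. frob m1 m2 n (X s))"
    by (rule order_trans[OF frob_tadd_le]) (simp add: insert.IH)
  finally show ?case using insert.hyps by simp
qed

lemma abs_entry_le_frob:
  assumes "i < m1" "j < m2" "k < n"
  shows "\<bar>X i j k\<bar> \<le> frob m1 m2 n X"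
proof -
  have "(\<lambda>(i, j, k). \<bar>X i j k\<bar>) (i, j, k) \<le> L2_set (\<lambda>(i, j, k). \<bar>X i j k\<bar>) ({..<m1} \<times> {..<m2} \<times> {..<n})"
    using assms by (intro member_le_L2_set) auto
  also have "\<dots> = frob m1 m2 n X"
    unfolding frob_eq_L2_set L2_set_def by (simp add: case_prod_unfold)
  finally show ?thesis by simp
qed

lemma frob_power2_columns: "(frob m1 m2 n X)\<^sup>2 = (\<Sum>j<m2. (frob m1 1 n (\<lambda>i _ k. X i j k))\<^sup>2)"
  unfolding frob_def by (simp add: sum_nonneg sum.swap[of _ "{..<m1}"])

lemma opnorm_bdd_above: "bdd_above {frob m1 1 n (tprod m2 n C X) | X. frob m2 1 n X = 1}"
proof (rule bdd_aboveI, clarify)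
  fix X assume X: "frob m2 1 n X = 1"
  have entry_bound: "\<bar>tprod m2 n C X i 0 k\<bar> \<le> (\<Sum>l<m2. \<Sum>q<n. \<bar>C i l ((k + n - q) mod n)\<bar>)" for i k
  proof -
    have "\<bar>tprod m2 n C X i 0 k\<bar> \<le> (\<Sum>l<m2. \<Sum>q<n. \<bar>C i l ((k + n - q) mod n)\<bar> * \<bar>X l 0 q\<bar>)"
      unfolding tprod_def abs_mult[symmetric] by (rule order_trans[OF sum_abs sum_mono]) (rule sum_abs)
    also have "\<dots> \<le> (\<Sum>l<m2. \<Sum>q<n. \<bar>C i l ((k + n - q) mod n)\<bar>)"
      using abs_entry_le_frob[of _ m2 0 1 _ n X] X by (intro sum_mono mult_left_le) auto
    finally show ?thesis .
  qed
  have "frob m1 1 n (tprod m2 n C X) \<le> (\<Sum>i<m1. \<Sum>j<1. \<Sum>k<n. \<bar>tprod m2 n C X i j k\<bar>)"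
    unfolding frob_eq_L2_set by (rule order_trans[OF L2_set_le_sum_abs]) (simp add: sum.cartesian_product case_prod_unfold)
  also have "\<dots> \<le> (\<Sum>i<m1. \<Sum>k<n. \<Sum>l<m2. \<Sum>q<n. \<bar>C i l ((k + n - q) mod n)\<bar>)"
    by (simp add: entry_bound sum_mono)
  finally show "frob m1 1 n (tprod m2 n C X) \<le> (\<Sum>i<m1. \<Sum>k<n. \<Sum>l<m2. \<Sum>q<n. \<bar>C i l ((k + n - q) mod n)\<bar>)" .
qed

lemma frob_tprod_le_opnorm:
  "frob m2 1 n X = 1 \<Longrightarrow> frob m1 1 n (tprod m2 n C X) \<le> opnorm m1 m2 n C"
  unfolding opnorm_def by (rule cSup_upper[OF _ opnorm_bdd_above]) auto

lemma opnorm_nonneg: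
  assumes "m2 > 0" "n > 0"
  shows "0 \<le> opnorm m1 m2 n C"
proof -
  define e :: tensor where "e = (\<lambda>l j q. if l = 0 \<and> q = 0 then 1 else 0)"
  have "(\<Sum>l<m2. \<Sum>j<1. \<Sum>q<n. (e l j q)\<^sup>2) = (\<Sum>l<m2. if l = 0 then 1 else 0)"
    using assms unfolding e_def by (intro sum.cong refl) (auto simp: if_distrib[of "\<lambda>x. x\<^sup>2"] cong: if_cong)
  then have "frob m2 1 n e = 1"
    using assms unfolding frob_def by simp
  then show ?thesis
    using frob_tprod_le_opnorm frob_nonneg order_trans by blast
qed

lemma frob_tprod_column_le:
  assumes "m2 > 0" "n > 0"
  shows "frob m1 1 n (tprod m2 n C Y) \<le> opnorm m1 m2 n C * frob m2 1 n Y"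
proof (cases "frob m2 1 n Y = 0")
  case True
  then have "Y l 0 q = 0" if "l < m2" "q < n" for l q
    using abs_entry_le_frob[of l m2 0 1 q n Y] that by simp
  then have "frob m1 1 n (tprod m2 n C Y) = frob m1 1 n (tprod m2 n C tzero)"
    by (intro frob_cong tprod_cong) (simp add: tzero_def)
  then show ?thesis using True by (simp add: tprod_tzero_right frob_tzero)
next
  case False
  define f where "f = frob m2 1 n Y"
  have "f > 0" using False frob_nonneg[of m2 1 n Y] unfolding f_def by simp
  then have "frob m2 1 n (tscale (1 / f) Y) = 1"
    unfolding f_def by (simp add: frob_tscale)
  then have "frob m1 1 n (tprod m2 n C (tscale (1 / f) Y)) \<le> opnorm m1 m2 n C"
    by (rule frob_tprod_le_opnorm)
  then have "frob m1 1 n (tprod m2 n C Y) / f \<le> opnorm m1 m2 n C"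
    using \<open>f > 0\<close> by (simp add: tprod_tscale_right frob_tscale)
  then show ?thesis using \<open>f > 0\<close> unfolding f_def[symmetric] by (simp add: pos_divide_le_eq)
qed

lemma frob_tprod_le:
  assumes "m2 > 0" "n > 0"
  shows "frob m1 m3 n (tprod m2 n C X) \<le> opnorm m1 m2 n C * frob m2 m3 n X"
proof (rule power2_le_imp_le)
  let ?column = "\<lambda>j. (\<lambda>l (_::nat) q. X l j q)"
  have column: "frob m1 1 n (\<lambda>i _ k. tprod m2 n C X i j k) = frob m1 1 n (tprod m2 n C (?column j))" for j
    by (rule frob_cong) (simp add: tprod_def)
  have "(frob m1 m3 n (tprod m2 n C X))\<^sup>2 = (\<Sum>j<m3. (frob m1 1 n (tprod m2 n C (?column j)))\<^sup>2)"
    unfolding frob_power2_columns[of m1 m3 n] column ..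
  also have "\<dots> \<le> (\<Sum>j<m3. (opnorm m1 m2 n C * frob m2 1 n (?column j))\<^sup>2)"
    by (intro sum_mono power_mono frob_tprod_column_le assms frob_nonneg)
  also have "\<dots> = (opnorm m1 m2 n C * frob m2 m3 n X)\<^sup>2"
    by (simp add: power_mult_distrib frob_power2_columns[of m2 m3 n X] sum_distrib_left)
  finally show "(frob m1 m3 n (tprod m2 n C X))\<^sup>2 \<le> (opnorm m1 m2 n C * frob m2 m3 n X)\<^sup>2" .
  show "0 \<le> opnorm m1 m2 n C * frob m2 m3 n X"
    using opnorm_nonneg[OF assms] frob_nonneg by simp
qed

section \<open>The error recursion of cyclic frontal slice descent\<close>

definition tslice_gram :: "nat \<Rightarrow> nat \<Rightarrow> tensor \<Rightarrow> nat \<Rightarrow> nat \<Rightarrow> tensor" where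
  "tslice_gram n1 n A i j = tprod n1 n (ttrans n (tslice A i)) (tslice A j)"

lemma cfsd_residual:
  assumes sol: "\<forall>i<n1. \<forall>j<n3. \<forall>k<n. tprod n2 n A Xs i j k = B i j k"
    and "i < n1" "j < n3" "k < n"
  shows "B i j k - (\<Sum>s<n. if s \<le> t
            then tprod n2 n (tslice A ((t - s) mod n)) (cfsd A B \<alpha> n1 n2 n (t - s)) i j k else 0)
       = (\<Sum>s<n. tprod n2 n (tslice A ((t + n - s) mod n)) (tsub Xs (cfsd A B \<alpha> n1 n2 n (t - s))) i j k)"
proof -
  have "B i j k = (\<Sum>s<n. tprod n2 n (tslice A s) Xs i j k)"
    using sol assms(2-4) by (subst (asm) tprod_tslice_sum) simp
  also have "\<dots> = (\<Sum>s<n. tprod n2 n (tslice A ((t + n - s) mod n)) Xs i j k)"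
    by (rule sum_cyclic_diff_reindex[symmetric])
  finally have B: "B i j k = \<dots>" .
  \<comment> \<open>For s > t the truncated index t - s is 0 and the iterate there is tzero, so the
    terms dropped from the residual are slice products as well.\<close>
  have "(if s \<le> t then tprod n2 n (tslice A ((t - s) mod n)) (cfsd A B \<alpha> n1 n2 n (t - s)) i j k else 0)
      = tprod n2 n (tslice A ((t + n - s) mod n)) (cfsd A B \<alpha> n1 n2 n (t - s)) i j k" for s
  proof (cases "s \<le> t")
    case True
    then have "(t + n - s) mod n = (t - s) mod n"
      by (metis Nat.add_diff_assoc2 mod_add_self2)
    then show ?thesis using True by simp
  next
    case False
    then show ?thesis by (simp add: tprod_tzero_right, simp add: tzero_def)
  qed
  then show ?thesis
    by (simp add: B tprod_tsub_right, simp add: tsub_def sum_subtractf)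
qed

lemma cfsd_error_step:
  fixes A B Xs :: tensor and \<alpha> :: real and t :: nat
  assumes sol: "\<forall>i<n1. \<forall>j<n3. \<forall>k<n. tprod n2 n A Xs i j k = B i j k"
    and "i < n2" "j < n3" "k < n"
  defines "D \<equiv> \<lambda>s. tsub (cfsd A B \<alpha> n1 n2 n s) Xs" and "c \<equiv> t mod n"
  shows "D (Suc t) i j k =
    tsub (tprod n2 n (tsub tident (tscale \<alpha> (tslice_gram n1 n A c c))) (D t))
      (tscale \<alpha> (\<lambda>i j k. \<Sum>s\<in>{1..<n}. tprod n2 n (tslice_gram n1 n A c ((t + n - s) mod n)) (D (t - s)) i j k))
      i j k"
proof -
  define Q where "Q s = tprod n2 n (tslice_gram n1 n A c ((t + n - s) mod n)) (D (t - s))" for s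
  have "D (Suc t) i j k = D t i j k
      + \<alpha> * (\<Sum>s<n. tprod n2 n (tslice_gram n1 n A c ((t + n - s) mod n))
                      (tsub Xs (cfsd A B \<alpha> n1 n2 n (t - s))) i j k)"
  proof -
    have "D (Suc t) i j k = D t i j k + \<alpha> * tprod n1 n (ttrans n (tslice A c))
      (\<lambda>l j q. \<Sum>s<n. tprod n2 n (tslice A ((t + n - s) mod n)) (tsub Xs (cfsd A B \<alpha> n1 n2 n (t - s))) l j q) i j k"
      unfolding D_def c_def using assms(3)
      by (simp add: tsub_def tadd_def tscale_def cfsd_residual[OF sol] cong: tprod_cong)
    then show ?thesis by (simp add: tprod_sum_right tprod_assoc tslice_gram_def)
  qed
  also have "\<dots> = D t i j k - \<alpha> * (\<Sum>s<n. Q s i j k)"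
    unfolding Q_def D_def by (simp add: tprod_tsub_right, simp add: tsub_def sum_subtractf algebra_simps)
  also have "\<dots> = D t i j k - \<alpha> * Q 0 i j k - \<alpha> * (\<Sum>s\<in>{1..<n}. Q s i j k)"
    using assms(4) by (simp add: lessThan_atLeast0 sum.atLeast_Suc_lessThan algebra_simps)
  also have "\<dots> = tsub (tprod n2 n (tsub tident (tscale \<alpha> (tslice_gram n1 n A c c))) (D t))
      (tscale \<alpha> (\<lambda>i j k. \<Sum>s\<in>{1..<n}. Q s i j k)) i j k"
    unfolding Q_def c_def using assms(2,4)
    by (simp add: tprod_tsub_left tprod_tscale_left, simp add: tsub_def tscale_def tprod_tident_left)
  finally show ?thesis unfolding Q_def .
qed

lemma frob_tsub_tprod_sum_le:
  assumes "m > 0" "n > 0" "finite S" "0 \<le> \<alpha>"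
  shows "frob m m3 n (tsub (tprod m n P Y) (tscale \<alpha> (\<lambda>i j k. \<Sum>s\<in>S. tprod m n (Q s) (Z s) i j k)))
    \<le> opnorm m m n P * frob m m3 n Y + \<alpha> * (\<Sum>s\<in>S. opnorm m m n (Q s) * frob m m3 n (Z s))"
proof -
  have sum_le: "frob m m3 n (\<lambda>i j k. \<Sum>s\<in>S. tprod m n (Q s) (Z s) i j k)
      \<le> (\<Sum>s\<in>S. opnorm m m n (Q s) * frob m m3 n (Z s))"
    using assms(3) by (rule order_trans[OF frob_sum_le sum_mono]) (rule frob_tprod_le[OF assms(1,2)])
  have "frob m m3 n (tsub (tprod m n P Y) (tscale \<alpha> (\<lambda>i j k. \<Sum>s\<in>S. tprod m n (Q s) (Z s) i j k)))
      \<le> frob m m3 n (tprod m n P Y) + \<alpha> * frob m m3 n (\<lambda>i j k. \<Sum>s\<in>S. tprod m n (Q s) (Z s) i j k)"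
    by (metis frob_tsub_le frob_tscale[OF assms(4)])
  also have "\<dots> \<le> opnorm m m n P * frob m m3 n Y + \<alpha> * (\<Sum>s\<in>S. opnorm m m n (Q s) * frob m m3 n (Z s))"
    using sum_le assms(4) by (intro add_mono mult_left_mono frob_tprod_le assms(1,2))
  finally show ?thesis .
qed

theorem lemma1:
  fixes A B Xs :: tensor and n1 n2 n3 n :: nat and \<alpha> :: real
  assumes dims: "n1 > 0" "n2 > 0" "n3 > 0" "n > 0"
    and alpha: "\<alpha> > 0"
    and sol: "\<forall>i<n1. \<forall>j<n3. \<forall>k<n. tprod n2 n A Xs i j k = B i j k"
    and uniq: "\<And>Y. (\<forall>i<n1. \<forall>j<n3. \<forall>k<n. tprod n2 n A Y i j k = B i j k) \<Longrightarrow>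
                 (\<forall>i<n2. \<forall>j<n3. \<forall>k<n. Y i j k = Xs i j k)"
  defines "E \<equiv> (\<lambda>s::int. frob n2 n3 n (tsub (cfsd A B \<alpha> n1 n2 n (nat s)) Xs))"
    and "\<kappa> \<equiv> Max ((\<lambda>i. opnorm n2 n2 n (tsub tident
                  (tscale \<alpha> (tprod n1 n (ttrans n (tslice A i)) (tslice A i))))) ` {..<n})"
    and "\<mu> \<equiv> Max ((\<lambda>(i, j). opnorm n2 n2 n (tprod n1 n (ttrans n (tslice A i)) (tslice A j)))
                  ` {(i, j). i < n \<and> j < n \<and> i \<noteq> j})"
  shows "\<forall>t::nat. E (int t + 1) \<le> \<kappa> * E (int t) + \<alpha> * \<mu> * (\<Sum>i=1..n-1. E (int t - int i))"
proof
  fix t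
  define c where "c = t mod n"
  define P where "P = tsub tident (tscale \<alpha> (tslice_gram n1 n A c c))"
  define Q where "Q s = tslice_gram n1 n A c ((t + n - s) mod n)" for s
  define D where "D s = tsub (cfsd A B \<alpha> n1 n2 n s) Xs" for s
  have E_D: "E (int t - int s) = frob n2 n3 n (D (t - s))" for s
    unfolding E_def D_def by (simp add: nat_minus_as_int)
  have \<kappa>: "opnorm n2 n2 n P \<le> \<kappa>"
    unfolding \<kappa>_def P_def tslice_gram_def c_def using dims(4) by (intro Max_ge) auto
  have \<mu>: "opnorm n2 n2 n (Q s) \<le> \<mu>" if "s \<in> {1..<n}" for s
  proof -
    have "finite {(i, j). i < n \<and> j < n \<and> i \<noteq> j}"
      by (rule finite_subset[of _ "{..<n} \<times> {..<n}"]) auto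
    moreover have "(t + n - s) mod n \<noteq> c"
      using that cyclic_diff_eq_mod_iff[of s n t] unfolding c_def by auto
    ultimately show ?thesis
      unfolding \<mu>_def Q_def tslice_gram_def using dims(4)
      by (intro Max_ge finite_imageI image_eqI[where x = "(c, (t + n - s) mod n)"]) (auto simp: c_def)
  qed
  have "E (int t + 1) = frob n2 n3 n (D (Suc t))"
    unfolding E_def D_def by (simp add: nat_add_distrib)
  also have "\<dots> = frob n2 n3 n
      (tsub (tprod n2 n P (D t)) (tscale \<alpha> (\<lambda>i j k. \<Sum>s\<in>{1..<n}. tprod n2 n (Q s) (D (t - s)) i j k)))"
    unfolding P_def Q_def D_def c_def by (rule frob_cong, rule cfsd_error_step[OF sol])
  also have "\<dots> \<le> opnorm n2 n2 n P * frob n2 n3 n (D t) + \<alpha> * (\<Sum>s\<in>{1..<n}. opnorm n2 n2 n (Q s) * frob n2 n3 n (D (t - s)))"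
    using dims alpha by (intro frob_tsub_tprod_sum_le) auto
  also have "\<dots> \<le> \<kappa> * E (int t) + \<alpha> * (\<Sum>s\<in>{1..<n}. \<mu> * E (int t - int s))"
    using \<kappa> \<mu> alpha E_D[of 0]
    by (auto intro!: add_mono mult_right_mono mult_left_mono sum_mono simp: E_D frob_nonneg)
  finally show "E (int t + 1) \<le> \<kappa> * E (int t) + \<alpha> * \<mu> * (\<Sum>i=1..n-1. E (int t - int i))"
    using dims(4) by (simp add: sum_distrib_left mult.assoc atLeastLessThanSuc_atLeastAtMost[symmetric])
qed

end
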